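(* Let $\mathcal{F}_1,\dots,\mathcal{F}_k$ be finite nonempty families of convex sets in $\mathbb{R}^d$ with $n_i=|\mathcal{F}_i|$, let $b\in\mathbb{R}^d$, let $\alpha\in(0,1]$ and $\beta=1-(1-\alpha)^{1/k}$. Assume that for at least an $\alpha$ fraction of the $\prod_{i=1}^k n_i$ transversals $\mathcal{T}$ of $\mathcal{F}_1,\dots,\mathcal{F}_k$, the set $K(\mathcal{T})$ has a point in $B(b,1)$. Then there exist $q\in\mathbb{R}^d$ and $i\in[k]$ such that at least $\beta n_i$ elements of $\mathcal{F}_i$ intersect the ball $B(q,1/\sqrt k)$.
   Context: A transversal of $\mathcal{F}_1,\dots,\mathcal{F}_k$ is $\mathcal{T}=(K_1,\dots,K_k)$ with $K_i\in\mathcal{F}_i$ for all $i$, and $K(\mathcal{T})=\bigcap_{i=1}^kK_i$. $B(p,\rho)$ is the closed Euclidean ball of centre $p$ and radius $\rho$. *)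

theory Defs
  imports "HOL-Analysis.Analysis"
begin

text \<open>Families are indexed: family i (for i < k) is F i 0, ..., F i (n i - 1),
  so repeated members are allowed. A transversal is a choice function
  t with t i < n i for all i < k; its member sets are F i (t i).\<close>

definition transversals :: "nat \<Rightarrow> (nat \<Rightarrow> nat) \<Rightarrow> (nat \<Rightarrow> nat) set" where
  "transversals k n = (\<Pi>\<^sub>E i\<in>{..<k}. {..<n i})"

definition Ktr :: "nat \<Rightarrow> (nat \<Rightarrow> nat \<Rightarrow> 'a set) \<Rightarrow> (nat \<Rightarrow> nat) \<Rightarrow> 'a set" where
  "Ktr k F t = (\<Inter>i\<in>{..<k}. F i (t i))"

end

theory Submission
  imports Defs
begin

text \<open>Fix a transversal \<open>(K\<^sub>1, \<dots>, K\<^sub>k)\<close> and put \<open>y\<^sub>1 = b\<close>, \<open>y\<^sub>i\<^sub>+\<^sub>1\<close> = the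
  nearest point of \<open>cl K\<^sub>i\<close> to \<open>y\<^sub>i\<close>. Projection onto a convex set containing \<open>x\<close> makes an
  obtuse angle, so \<open>|y\<^sub>i - x|\<^sup>2 \<ge> |y\<^sub>i - y\<^sub>i\<^sub>+\<^sub>1|\<^sup>2 + |y\<^sub>i\<^sub>+\<^sub>1 - x|\<^sup>2\<close>. If every \<open>K\<^sub>i\<close>
  missed \<open>B(y\<^sub>i, 1/\<surd>k)\<close> and \<open>x \<in> K(T) \<inter> B(b, 1)\<close>, the first \<open>k - 1\<close> steps would each cost
  \<open>1/k\<close> and \<open>|y\<^sub>k - x| > 1/\<surd>k\<close>, contradicting \<open>|b - x| \<le> 1\<close>. Since \<open>y\<^sub>i\<close> depends
  only on \<open>K\<^sub>1, \<dots>, K\<^sub>i\<^sub>-\<^sub>1\<close>, if every ball of radius \<open>1/\<surd>k\<close> met fewer than \<open>\<beta> n\<^sub>i\<close>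
  members of \<open>F\<^sub>i\<close>, choosing the \<open>K\<^sub>i\<close> one after another would give more than
  \<open>(1 - \<beta>)\<^sup>k \<Prod> n\<^sub>i = (1 - \<alpha>) \<Prod> n\<^sub>i\<close> transversals in which every \<open>K\<^sub>i\<close> misses its ball,
  leaving fewer than \<open>\<alpha> \<Prod> n\<^sub>i\<close> for those with \<open>K(T) \<inter> B(b, 1) \<noteq> {}\<close>.\<close>

lemma closest_point_dist_sq_add_le:
  fixes S :: "'a::{real_inner,heine_borel} set"
  assumes "convex S" "closed S" "z \<in> S"
  shows "(dist a (closest_point S a))\<^sup>2 + (dist (closest_point S a) z)\<^sup>2 \<le> (dist a z)\<^sup>2"
proof -
  let ?p = "closest_point S a"
  have obtuse: "inner (a - ?p) (z - ?p) \<le> 0"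
    using closest_point_dot[OF assms] .
  have "a - z = (a - ?p) - (z - ?p)" by simp
  then have "(dist a z)\<^sup>2 = (dist a ?p)\<^sup>2 + (dist ?p z)\<^sup>2 - 2 * inner (a - ?p) (z - ?p)"
    by (simp add: dist_norm power2_norm_eq_inner inner_diff inner_commute norm_minus_commute)
  with obtuse show ?thesis by linarith
qed

primrec proj_seq :: "(nat \<Rightarrow> 'a::{real_inner,heine_borel} set) \<Rightarrow> 'a \<Rightarrow> nat \<Rightarrow> 'a" where
  "proj_seq C b 0 = b"
| "proj_seq C b (Suc i) = closest_point (closure (C i)) (proj_seq C b i)"

lemma proj_seq_cong: "(\<And>j. j < i \<Longrightarrow> C j = C' j) \<Longrightarrow> proj_seq C b i = proj_seq C' b i"
  by (induction i) auto

lemma proj_seq_meets_cball: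
  fixes C :: "nat \<Rightarrow> 'a::{real_inner,heine_borel} set"
  assumes "0 < k" "0 \<le> r"
    and convex: "\<And>i. i < k \<Longrightarrow> convex (C i)"
    and common: "\<And>i. i < k \<Longrightarrow> x \<in> C i"
    and near: "dist b x \<le> sqrt (real k) * r"
  shows "\<exists>i<k. C i \<inter> cball (proj_seq C b i) r \<noteq> {}"
proof (rule ccontr)
  let ?y = "proj_seq C b"
  assume "\<not> ?thesis"
  then have miss: "C i \<inter> cball (?y i) r = {}" if "i < k" for i
    using that by blast
  have far: "r < dist (?y i) x" if "i < k" for i
    using miss[OF that] common[OF that] by (auto simp: not_le)
  have step: "r\<^sup>2 + (dist (?y (Suc i)) x)\<^sup>2 \<le> (dist (?y i) x)\<^sup>2" if "i < k" for i
  proof -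
    have x_cl: "x \<in> closure (C i)"
      using common[OF that] closure_subset by blast
    then have "?y (Suc i) \<in> closure (C i)"
      using closest_point_in_set[OF closed_closure, of "C i"] by force
    moreover have "ball (?y i) r \<inter> closure (C i) = {}"
      using miss[OF that] ball_subset_cball open_Int_closure_eq_empty[OF open_ball] by blast
    ultimately have "r \<le> dist (?y i) (?y (Suc i))"
      unfolding disjoint_iff mem_ball not_less[symmetric] by blast
    then have "r\<^sup>2 \<le> (dist (?y i) (?y (Suc i)))\<^sup>2"
      using \<open>0 \<le> r\<close> by (simp add: power_mono)
    moreover have "(dist (?y i) (?y (Suc i)))\<^sup>2 + (dist (?y (Suc i)) x)\<^sup>2 \<le> (dist (?y i) x)\<^sup>2"
      using closest_point_dist_sq_add_le[OF convex_closure[OF convex[OF that]] closed_closure x_cl]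
      by simp
    ultimately show ?thesis by linarith
  qed
  have descent: "real m * r\<^sup>2 + (dist (?y m) x)\<^sup>2 \<le> (dist b x)\<^sup>2" if "m < k" for m
    using that
  proof (induction m)
    case 0
    then show ?case by simp
  next
    case (Suc m)
    then show ?case using step[of m] by (simp add: algebra_simps)
  qed
  have "r\<^sup>2 < (dist (?y (k - 1)) x)\<^sup>2"
    using far[of "k - 1"] \<open>0 < k\<close> \<open>0 \<le> r\<close> by (simp add: power_strict_mono)
  with descent[of "k - 1"] \<open>0 < k\<close> have "real k * r\<^sup>2 < (dist b x)\<^sup>2"
    by (simp add: of_nat_diff algebra_simps)
  moreover have "(dist b x)\<^sup>2 \<le> real k * r\<^sup>2"
    using power_mono[OF near zero_le_dist, of 2] by (simp add: power_mult_distrib)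
  ultimately show False by linarith
qed

lemma prod_le_card_PiE_sequential:
  fixes P :: "(nat \<Rightarrow> nat) \<Rightarrow> nat \<Rightarrow> bool" and a :: "nat \<Rightarrow> nat"
  assumes causal: "\<And>t t' i. (\<And>j. j \<le> i \<Longrightarrow> t j = t' j) \<Longrightarrow> P t i = P t' i"
    and choices: "\<And>t i. i < m \<Longrightarrow> a i \<le> card {j. j < n i \<and> P (t(i := j)) i}"
  shows "(\<Prod>i<m. a i) \<le> card {t \<in> (\<Pi>\<^sub>E i\<in>{..<m}. {..<n i}). \<forall>i<m. P t i}"
  using choices
proof (induction m)
  case 0
  have "{t \<in> (\<Pi>\<^sub>E i\<in>{..<0::nat}. {..<n i}). \<forall>i<0. P t i} = {\<lambda>_. undefined}"
    by auto
  then show ?case by simp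
next
  case (Suc m)
  define S where "S = {t \<in> (\<Pi>\<^sub>E i\<in>{..<m}. {..<n i}). \<forall>i<m. P t i}"
  define S' where "S' = {t \<in> (\<Pi>\<^sub>E i\<in>{..<Suc m}. {..<n i}). \<forall>i<Suc m. P t i}"
  define J where "J s = {j. j < n m \<and> P (s(m := j)) m}" for s
  let ?extend = "\<lambda>(s, j). s(m := j)"
  have "finite S'"
    unfolding S'_def by (auto intro!: finite_PiE)
  moreover have "?extend ` (SIGMA s:S. J s) \<subseteq> S'"
  proof safe
    fix s j assume s: "s \<in> S" and j: "j \<in> J s"
    have "P (s(m := j)) i = P s i" if "i < m" for i
      using that by (intro causal) auto
    with s j show "s(m := j) \<in> S'"
      unfolding S_def S'_def J_def by (auto simp: PiE_iff less_Suc_eq extensional_def)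
  qed
  ultimately have "card (?extend ` (SIGMA s:S. J s)) \<le> card S'"
    by (rule card_mono)
  moreover have "inj_on ?extend (SIGMA s:S. J s)"
  proof (rule inj_onI, clarsimp)
    fix s j s' j' assume "s \<in> S" "s' \<in> S" and eq: "s(m := j) = s'(m := j')"
    then have "s m = s' m"
      unfolding S_def by (auto simp: PiE_iff extensional_def)
    then show "s = s' \<and> j = j'"
      using eq by (metis fun_upd_triv fun_upd_upd fun_upd_same)
  qed
  moreover have "card S * a m \<le> card (SIGMA s:S. J s)"
  proof -
    have "card S * a m = (\<Sum>s\<in>S. a m)" by simp
    also have "\<dots> \<le> (\<Sum>s\<in>S. card (J s))"
      unfolding J_def by (intro sum_mono Suc.prems) simp
    also have "\<dots> = card (SIGMA s:S. J s)"
      unfolding S_def J_def by (simp add: card_SigmaI finite_PiE)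
    finally show ?thesis .
  qed
  moreover have "(\<Prod>i<m. a i) \<le> card S"
    unfolding S_def using Suc by simp
  ultimately show ?case
    unfolding S'_def by (simp add: card_image) (meson le_trans mult_le_mono1)
qed

lemma card_transversals_avoiding_gt:
  fixes F :: "nat \<Rightarrow> nat \<Rightarrow> 'a::metric_space set" and c :: "(nat \<Rightarrow> nat) \<Rightarrow> nat \<Rightarrow> 'a"
  assumes "0 < k" "\<beta> \<le> 1"
    and causal: "\<And>t t' i. (\<And>j. j < i \<Longrightarrow> t j = t' j) \<Longrightarrow> c t i = c t' i"
    and sparse: "\<And>i q. i < k \<Longrightarrow>
      real (card {j. j < n i \<and> F i j \<inter> cball q r \<noteq> {}}) < \<beta> * real (n i)"
  shows "(1 - \<beta>) ^ k * (\<Prod>i<k. real (n i))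
    < real (card {t \<in> transversals k n. \<forall>i<k. F i (t i) \<inter> cball (c t i) r = {}})"
proof -
  \<comment> \<open>The least integer above \<open>(1 - \<beta>) n\<^sub>i\<close>: rounding up is what makes the final bound strict.\<close>
  define a where "a i = nat (\<lfloor>(1 - \<beta>) * real (n i)\<rfloor> + 1)" for i
  have many_miss: "(1 - \<beta>) * real (n i) < real (card {j. j < n i \<and> F i j \<inter> cball q r = {}})"
    if "i < k" for i q
  proof -
    let ?hit = "{j. j < n i \<and> F i j \<inter> cball q r \<noteq> {}}"
    have "{j. j < n i \<and> F i j \<inter> cball q r = {}} = {..<n i} - ?hit"
      by auto
    moreover have "?hit \<subseteq> {..<n i}"
      by auto
    moreover from this have "card ?hit \<le> n i"
      using card_mono[of "{..<n i}" ?hit] by simp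
    ultimately have "real (card {j. j < n i \<and> F i j \<inter> cball q r = {}}) = real (n i) - real (card ?hit)"
      by (simp add: card_Diff_subset finite_subset of_nat_diff)
    with sparse[OF that, of q] show ?thesis
      by (simp add: left_diff_distrib)
  qed
  have nonneg: "0 \<le> (1 - \<beta>) * real (n i)" for i
    using \<open>\<beta> \<le> 1\<close> by simp
  have a_gt: "(1 - \<beta>) * real (n i) < real (a i)" for i
  proof -
    have "0 \<le> \<lfloor>(1 - \<beta>) * real (n i)\<rfloor> + 1"
      using nonneg[of i] by simp
    then show ?thesis
      unfolding a_def by simp
  qed
  have "(\<Prod>i<k. a i) \<le> card {t \<in> transversals k n. \<forall>i<k. F i (t i) \<inter> cball (c t i) r = {}}"
    unfolding transversals_def
  proof (rule prod_le_card_PiE_sequential)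
    fix t t' :: "nat \<Rightarrow> nat" and i assume "\<And>j. j \<le> i \<Longrightarrow> t j = t' j"
    moreover from this have "c t i = c t' i"
      by (intro causal) simp
    ultimately show "(F i (t i) \<inter> cball (c t i) r = {}) = (F i (t' i) \<inter> cball (c t' i) r = {})"
      by simp
  next
    fix t :: "nat \<Rightarrow> nat" and i assume "i < k"
    let ?miss = "{j. j < n i \<and> F i j \<inter> cball (c t i) r = {}}"
    have "\<lfloor>(1 - \<beta>) * real (n i)\<rfloor> < int (card ?miss)"
      using many_miss[OF \<open>i < k\<close>] by (simp add: floor_less_iff)
    moreover have "c (t(i := j)) i = c t i" for j
      by (intro causal) simp
    ultimately show "a i \<le> card {j. j < n i \<and> F i ((t(i := j)) i) \<inter> cball (c (t(i := j)) i) r = {}}"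
      unfolding a_def by (simp add: nat_le_iff)
  qed
  then have "(\<Prod>i<k. real (a i))
      \<le> real (card {t \<in> transversals k n. \<forall>i<k. F i (t i) \<inter> cball (c t i) r = {}})"
    by (simp flip: of_nat_prod)
  moreover have "(1 - \<beta>) ^ k * (\<Prod>i<k. real (n i)) < (\<Prod>i<k. real (a i))"
  proof -
    have "(1 - \<beta>) ^ k * (\<Prod>i<k. real (n i)) = (\<Prod>i<k. (1 - \<beta>) * real (n i))"
      by (simp add: prod.distrib)
    also have "\<dots> < (\<Prod>i<k. real (a i))"
    proof (rule prod_mono_strict)
      show "0 \<in> {..<k}" "finite {..<k}"
        using \<open>0 < k\<close> by simp_all
      show "(1 - \<beta>) * real (n 0) < real (a 0)"
        by (rule a_gt)
      show "0 \<le> (1 - \<beta>) * real (n i) \<and> (1 - \<beta>) * real (n i) \<le> real (a i)" for i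
        using nonneg[of i] a_gt[of i] by simp
      show "0 < real (a i)" for i
        using nonneg[of i] a_gt[of i] by linarith
    qed
    finally show ?thesis .
  qed
  ultimately show ?thesis
    by linarith
qed

lemma finite_transversals: "finite (transversals k n)"
  unfolding transversals_def by (simp add: finite_PiE)

lemma card_transversals: "card (transversals k n) = (\<Prod>i<k. n i)"
  unfolding transversals_def by (simp add: card_PiE)

theorem theorem4p3:
  fixes F :: "nat \<Rightarrow> nat \<Rightarrow> 'a::euclidean_space set"
    and n :: "nat \<Rightarrow> nat" and k :: nat and b :: 'a and \<alpha> \<beta> :: real
  assumes k: "k \<ge> 1"
    and nonempty: "\<forall>i<k. n i \<ge> 1"
    and convex: "\<forall>i<k. \<forall>j<n i. convex (F i j)"
    and alpha: "0 < \<alpha>" "\<alpha> \<le> 1"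
    and beta: "\<beta> = 1 - (1 - \<alpha>) powr (1 / real k)"
    and frac: "real (card {t \<in> transversals k n. Ktr k F t \<inter> cball b 1 \<noteq> {}})
                 \<ge> \<alpha> * (\<Prod>i<k. real (n i))"
  shows "\<exists>q i. i < k \<and>
           real (card {j. j < n i \<and> F i j \<inter> cball q (1 / sqrt (real k)) \<noteq> {}})
             \<ge> \<beta> * real (n i)"
proof (rule ccontr)
  define r where "r = 1 / sqrt (real k)"
  define G where "G = {t \<in> transversals k n. Ktr k F t \<inter> cball b 1 \<noteq> {}}"
  define A where "A = {t \<in> transversals k n.
    \<forall>i<k. F i (t i) \<inter> cball (proj_seq (\<lambda>i. F i (t i)) b i) r = {}}"
  assume "\<not> ?thesis"
  then have sparse: "real (card {j. j < n i \<and> F i j \<inter> cball q r \<noteq> {}}) < \<beta> * real (n i)"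
    if "i < k" for i q
    using that not_le unfolding r_def by blast
  have "(1 - \<beta>) ^ k = 1 - \<alpha>"
    using k alpha unfolding beta by (simp add: powr_inverse_root)
  moreover have "(1 - \<beta>) ^ k * (\<Prod>i<k. real (n i)) < real (card A)"
    unfolding A_def using k sparse
    by (intro card_transversals_avoiding_gt) (auto intro!: proj_seq_cong simp: beta)
  ultimately have many_avoid: "(1 - \<alpha>) * (\<Prod>i<k. real (n i)) < real (card A)"
    by simp
  have "t \<notin> A" if t: "t \<in> G" for t
  proof -
    obtain x where "x \<in> Ktr k F t" "dist b x \<le> 1"
      using t unfolding G_def by auto
    with t have "\<exists>i<k. F i (t i) \<inter> cball (proj_seq (\<lambda>i. F i (t i)) b i) r \<noteq> {}"
      using k convex unfolding G_def r_def Ktr_def transversals_def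
      by (intro proj_seq_meets_cball) auto
    then show ?thesis
      unfolding A_def by blast
  qed
  moreover have "G \<subseteq> transversals k n" "A \<subseteq> transversals k n"
    unfolding G_def A_def by auto
  ultimately have "card G + card A \<le> card (transversals k n)"
    using finite_transversals
    by (metis card_Un_disjoint card_mono disjoint_iff finite_subset le_sup_iff)
  then have "real (card G) + real (card A) \<le> (\<Prod>i<k. real (n i))"
    unfolding card_transversals by (metis of_nat_add of_nat_mono of_nat_prod)
  with frac many_avoid show False
    unfolding G_def[symmetric] by (simp add: left_diff_distrib)
qed

end
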